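(* Let $K$ be a finite connected bipartite simple graph. Then the number of isomorphism classes of simple graphs $G$ with $KC(G)\cong K$ equals $|\Pi_K/{\cong}|$, the number of conjugacy classes of polarities of $K$ under $\operatorname{Aut}K$. In particular, $K$ is the Kronecker cover of exactly $k$ pairwise non-isomorphic simple graphs if and only if $k=|\Pi_K/{\cong}|$.
   Context: For a simple graph $G$, the Kronecker cover $KC(G)$ is the graph with vertex set $V(G)\times\{0,1\}$ in which $(u,a)$ is adjacent to $(v,b)$ if and only if $uv\in E(G)$ and $a\neq b$. Equivalently, it is the tensor product $G\times K_2$. Let $K$ be a connected bipartite graph with bipartition $(V_1,V_2)$. A polarity of $K$ is an automorphism $\pi\in\operatorname{Aut}K$ such that: - $\pi$ is a fixed-point-free involution; - $\pi(V_1)=V_2$; - for every vertex $v$, the vertices $v$ and $\pi(v)$ are non-adjacent. Let $\Pi_K\subseteq\operatorname{Aut}K$ be the set of all polarities of $K$. Define two polarities $\pi,\pi'$ to be equivalent, written $\pi\cong\pi'$, if $\pi'=\alpha\pi\alpha^{-1}$ for some $\alpha\in\operatorname{Aut}K$; this is an equivalence relation on $\Pi_K$. Then $\Pi_K/{\cong}$ denotes the set of equivalence classes. *)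

theory Defs
  imports Main
begin

definition simple_graph :: "'a set \<Rightarrow> 'a set set \<Rightarrow> bool" where
  "simple_graph V E \<longleftrightarrow> finite V \<and>
     (\<forall>e\<in>E. \<exists>u v. e = {u, v} \<and> u \<noteq> v \<and> u \<in> V \<and> v \<in> V)"

definition graph_iso :: "'a set \<times> 'a set set \<Rightarrow> 'b set \<times> 'b set set \<Rightarrow> bool" where
  "graph_iso G H \<longleftrightarrow> (\<exists>f. bij_betw f (fst G) (fst H) \<and>
     (\<forall>u\<in>fst G. \<forall>v\<in>fst G. {u, v} \<in> snd G \<longleftrightarrow> {f u, f v} \<in> snd H))"

definition kronecker_cover :: "'a set \<Rightarrow> 'a set set \<Rightarrow> ('a \<times> bool) set \<times> ('a \<times> bool) set set" where
  "kronecker_cover V E =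
     (V \<times> UNIV, {{(u, a), (v, b)} | u v a b. {u, v} \<in> E \<and> a \<noteq> b})"

definition connected_graph :: "'a set \<Rightarrow> 'a set set \<Rightarrow> bool" where
  "connected_graph V E \<longleftrightarrow> V \<noteq> {} \<and>
     (\<forall>u\<in>V. \<forall>v\<in>V. (\<lambda>x y. {x, y} \<in> E)\<^sup>*\<^sup>* u v)"

definition bipartition :: "'a set \<Rightarrow> 'a set set \<Rightarrow> 'a set \<Rightarrow> 'a set \<Rightarrow> bool" where
  "bipartition V E V1 V2 \<longleftrightarrow> V1 \<union> V2 = V \<and> V1 \<inter> V2 = {} \<and>
     (\<forall>u v. {u, v} \<in> E \<longrightarrow> (u \<in> V1 \<and> v \<in> V2) \<or> (u \<in> V2 \<and> v \<in> V1))"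

text \<open>Automorphisms of (V,E), represented as permutations of V extended by the
  identity outside V (so that composition and inverse are the usual ones).\<close>

definition graph_aut :: "'a set \<Rightarrow> 'a set set \<Rightarrow> ('a \<Rightarrow> 'a) set" where
  "graph_aut V E = {\<alpha>. bij_betw \<alpha> V V \<and> (\<forall>x. x \<notin> V \<longrightarrow> \<alpha> x = x) \<and>
     (\<forall>u\<in>V. \<forall>v\<in>V. {u, v} \<in> E \<longleftrightarrow> {\<alpha> u, \<alpha> v} \<in> E)}"

definition polarities :: "'a set \<Rightarrow> 'a set set \<Rightarrow> 'a set \<Rightarrow> 'a set \<Rightarrow> ('a \<Rightarrow> 'a) set" where
  "polarities V E V1 V2 = {\<pi> \<in> graph_aut V E.
     (\<forall>v\<in>V. \<pi> (\<pi> v) = v \<and> \<pi> v \<noteq> v) \<and> \<pi> ` V1 = V2 \<and>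
     (\<forall>v\<in>V. {v, \<pi> v} \<notin> E)}"

definition polarity_conj :: "'a set \<Rightarrow> 'a set set \<Rightarrow> 'a set \<Rightarrow> 'a set \<Rightarrow> (('a \<Rightarrow> 'a) \<times> ('a \<Rightarrow> 'a)) set" where
  "polarity_conj V E V1 V2 = {(\<pi>, \<pi>'). \<pi> \<in> polarities V E V1 V2 \<and> \<pi>' \<in> polarities V E V1 V2 \<and>
     (\<exists>\<alpha>\<in>graph_aut V E. \<pi>' = \<alpha> \<circ> \<pi> \<circ> inv \<alpha>)}"

text \<open>Simple graphs (represented on vertex type nat, which suffices up to
  isomorphism) whose Kronecker cover is isomorphic to (V,E), and the
  isomorphism relation on them.\<close>

definition kc_preimages :: "'a set \<Rightarrow> 'a set set \<Rightarrow> (nat set \<times> nat set set) set" where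
  "kc_preimages V E = {G. simple_graph (fst G) (snd G) \<and>
     graph_iso (kronecker_cover (fst G) (snd G)) (V, E)}"

definition iso_rel :: "(nat set \<times> nat set set) set \<Rightarrow> ((nat set \<times> nat set set) \<times> (nat set \<times> nat set set)) set" where
  "iso_rel S = {(G, H). G \<in> S \<and> H \<in> S \<and> graph_iso G H}"

end

theory Submission
  imports Defs "HOL-Combinatorics.Permutations"
begin

(* An isomorphism \<phi> from KC(G) onto K transports the swap (v, a) \<mapsto> (v, \<not> a) of the two
   layers of the cover to a polarity of K; since K is connected, its 2-colouring is unique up to
   exchanging the colours, so this polarity exchanges V1 and V2.  Every polarity \<pi> arises
   this way, from the orbit graph K/\<pi> whose vertices are the orbits {v, \<pi> v}.  An isomorphism
   G \<cong> H lifts to an isomorphism of the covers commuting with the swap, hence induces an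
   automorphism of K conjugating the two polarities; conversely an automorphism conjugating
   them yields such an isomorphism of covers, which maps fibres to fibres and so descends to
   G \<cong> H.  Hence G \<mapsto> (transported swap) is a bijection between isomorphism classes of
   Kronecker-cover preimages of K and conjugacy classes of polarities. *)

lemma equiv_reflected:
  assumes R: "equiv A R" and S: "S \<subseteq> B \<times> B" and f: "f ` B \<subseteq> A"
    and reflects: "\<And>b b'. b \<in> B \<Longrightarrow> b' \<in> B \<Longrightarrow> (b, b') \<in> S \<longleftrightarrow> (f b, f b') \<in> R"
  shows "equiv B S"
proof (rule equivI)
  have "refl_on A R" "sym R" "trans R" using R by (auto elim: equivE)
  show "refl_on B S"
    using S f reflects refl_onD[OF \<open>refl_on A R\<close>] by (auto simp: refl_on_def)
  show "sym S" using S reflects symD[OF \<open>sym R\<close>] by (auto intro!: symI)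
  show "trans S"
  proof (rule transI)
    fix x y z assume xyz: "(x, y) \<in> S" "(y, z) \<in> S"
    then have "x \<in> B" "y \<in> B" "z \<in> B" using S by auto
    with xyz show "(x, z) \<in> S" using reflects transD[OF \<open>trans R\<close>] by blast
  qed
qed (rule S)

lemma bij_betw_quotients:
  assumes R: "equiv A R" and S: "S \<subseteq> B \<times> B" and f: "f ` B \<subseteq> A"
    and reflects: "\<And>b b'. b \<in> B \<Longrightarrow> b' \<in> B \<Longrightarrow> (b, b') \<in> S \<longleftrightarrow> (f b, f b') \<in> R"
    and onto: "\<And>a. a \<in> A \<Longrightarrow> \<exists>b\<in>B. (f b, a) \<in> R"
  shows "bij_betw (\<lambda>X. R `` (f ` X)) (B // S) (A // R)"
proof -
  have "equiv B S" using R S f reflects by (rule equiv_reflected)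
  have class_image: "R `` (f ` (S `` {b})) = R `` {f b}" if b: "b \<in> B" for b
  proof -
    have "R `` (f ` (S `` {b})) = (\<Union>b'\<in>S `` {b}. R `` {f b'})" by blast
    also have "\<dots> = R `` {f b}"
    proof (rule UN_constant_eq)
      show "b \<in> S `` {b}" using equiv_class_self[OF \<open>equiv B S\<close> b] .
      show "\<forall>b'\<in>S `` {b}. R `` {f b'} = R `` {f b}"
        using S reflects b equiv_class_eq[OF R] by (metis Image_singleton_iff mem_Sigma_iff subsetD)
    qed
    finally show ?thesis .
  qed
  show ?thesis
  proof (rule bij_betw_imageI)
    show "inj_on (\<lambda>X. R `` (f ` X)) (B // S)"
    proof (rule inj_onI)
      fix X Y assume "X \<in> B // S" "Y \<in> B // S" and eq: "R `` (f ` X) = R `` (f ` Y)"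
      then obtain b c where "b \<in> B" "c \<in> B" "X = S `` {b}" "Y = S `` {c}"
        by (auto elim!: quotientE)
      moreover have "f b \<in> A" "f c \<in> A" using f \<open>b \<in> B\<close> \<open>c \<in> B\<close> by auto
      ultimately have "(f b, f c) \<in> R"
        using eq class_image eq_equiv_class_iff[OF R] by simp
      then show "X = Y"
        using reflects \<open>b \<in> B\<close> \<open>c \<in> B\<close> \<open>X = S `` {b}\<close> \<open>Y = S `` {c}\<close>
          equiv_class_eq[OF \<open>equiv B S\<close>] by blast
    qed
    show "(\<lambda>X. R `` (f ` X)) ` (B // S) = A // R"
    proof
      show "(\<lambda>X. R `` (f ` X)) ` (B // S) \<subseteq> A // R"
        using class_image f by (auto elim!: quotientE intro!: quotientI)
      show "A // R \<subseteq> (\<lambda>X. R `` (f ` X)) ` (B // S)"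
      proof
        fix X assume "X \<in> A // R"
        then obtain a where "X = R `` {a}" "a \<in> A" by (rule quotientE)
        then obtain b where "b \<in> B" "X = R `` {f b}" using onto equiv_class_eq[OF R] by metis
        then have "X = R `` (f ` (S `` {b}))" using class_image by simp
        with \<open>b \<in> B\<close> show "X \<in> (\<lambda>X. R `` (f ` X)) ` (B // S)" by (blast intro: quotientI)
      qed
    qed
  qed
qed

definition graph_iso_map :: "('a \<Rightarrow> 'b) \<Rightarrow> 'a set \<times> 'a set set \<Rightarrow> 'b set \<times> 'b set set \<Rightarrow> bool" where
  "graph_iso_map f G H \<longleftrightarrow> bij_betw f (fst G) (fst H) \<and>
     (\<forall>u\<in>fst G. \<forall>v\<in>fst G. {u, v} \<in> snd G \<longleftrightarrow> {f u, f v} \<in> snd H)"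

lemma graph_iso_iff_graph_iso_map: "graph_iso G H \<longleftrightarrow> (\<exists>f. graph_iso_map f G H)"
  unfolding graph_iso_def graph_iso_map_def ..

lemma graph_iso_mapD:
  assumes "graph_iso_map f G H"
  shows "bij_betw f (fst G) (fst H)"
    and "u \<in> fst G \<Longrightarrow> v \<in> fst G \<Longrightarrow> {f u, f v} \<in> snd H \<longleftrightarrow> {u, v} \<in> snd G"
  using assms unfolding graph_iso_map_def by auto

lemma graph_iso_map_id: "graph_iso_map id G G"
  unfolding graph_iso_map_def by simp

lemma graph_iso_map_comp:
  assumes "graph_iso_map f G H" and "graph_iso_map g H K"
  shows "graph_iso_map (g \<circ> f) G K"
  using assms bij_betw_trans[of f "fst G" "fst H" g "fst K"]
  unfolding graph_iso_map_def by (auto simp: bij_betw_apply)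

lemma graph_iso_map_inv_into:
  assumes "graph_iso_map f G H"
  shows "graph_iso_map (inv_into (fst G) f) H G"
proof -
  have f: "bij_betw f (fst G) (fst H)" using assms by (rule graph_iso_mapD)
  show ?thesis
    unfolding graph_iso_map_def
  proof (intro conjI ballI)
    show "bij_betw (inv_into (fst G) f) (fst H) (fst G)" using f by (rule bij_betw_inv_into)
    fix u v assume "u \<in> fst H" "v \<in> fst H"
    then show "{u, v} \<in> snd H \<longleftrightarrow> {inv_into (fst G) f u, inv_into (fst G) f v} \<in> snd G"
      using graph_iso_mapD(2)[OF assms, of "inv_into (fst G) f u" "inv_into (fst G) f v"] f
      by (simp add: bij_betw_def inv_into_into f_inv_into_f)
  qed
qed

lemma graph_iso_map_cong:
  assumes "graph_iso_map f G H" and "\<And>x. x \<in> fst G \<Longrightarrow> f x = g x"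
  shows "graph_iso_map g G H"
  using assms bij_betw_cong[of "fst G" f g] unfolding graph_iso_map_def by auto

lemma iso_rel_equiv: "equiv S (iso_rel S)"
proof (rule equivI)
  have "graph_iso G G" for G :: "nat set \<times> nat set set"
    using graph_iso_map_id graph_iso_iff_graph_iso_map by blast
  moreover have "graph_iso H G" if "graph_iso G H" for G H :: "nat set \<times> nat set set"
    using that graph_iso_map_inv_into graph_iso_iff_graph_iso_map by blast
  moreover have "graph_iso G K" if "graph_iso G H" "graph_iso H K" for G H K :: "nat set \<times> nat set set"
    using that graph_iso_map_comp unfolding graph_iso_iff_graph_iso_map by blast
  ultimately show "refl_on S (iso_rel S)" "sym (iso_rel S)" "trans (iso_rel S)"
    unfolding iso_rel_def refl_on_def sym_def trans_def by blast+
qed (auto simp: iso_rel_def)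

lemma graph_aut_iff:
  "\<alpha> \<in> graph_aut V E \<longleftrightarrow> graph_iso_map \<alpha> (V, E) (V, E) \<and> (\<forall>x. x \<notin> V \<longrightarrow> \<alpha> x = x)"
  unfolding graph_aut_def graph_iso_map_def by auto

lemma graph_aut_permutes: "\<alpha> \<in> graph_aut V E \<Longrightarrow> \<alpha> permutes V"
  unfolding graph_aut_def by (auto intro: bij_imp_permutes)

lemma finite_graph_aut: "finite V \<Longrightarrow> finite (graph_aut V E)"
  by (rule finite_subset[OF _ finite_permutations]) (auto dest: graph_aut_permutes)

definition layer_swap :: "'a \<times> bool \<Rightarrow> 'a \<times> bool" where
  "layer_swap x = (fst x, \<not> snd x)"

lemma layer_swap_simps [simp]:
  "fst (layer_swap x) = fst x" "snd (layer_swap x) = (\<not> snd x)" "layer_swap (layer_swap x) = x"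
  by (simp_all add: layer_swap_def)

lemma layer_swap_neq: "layer_swap x \<noteq> x"
  by (simp add: layer_swap_def prod_eq_iff)

lemma layer_swap_pair: "{x, layer_swap x} = {fst x} \<times> UNIV"
  by (cases x) (auto simp: layer_swap_def)

lemma kronecker_cover_edge:
  "{x, y} \<in> snd (kronecker_cover V E) \<longleftrightarrow> {fst x, fst y} \<in> E \<and> snd x \<noteq> snd y"
  unfolding kronecker_cover_def by (cases x; cases y) (auto simp: doubleton_eq_iff insert_commute)

lemma kronecker_cover_edge_fibre:
  "(\<exists>b. {x, (v, b)} \<in> snd (kronecker_cover V E)) \<longleftrightarrow> {fst x, v} \<in> E"
  unfolding kronecker_cover_edge by auto

lemma fst_kronecker_cover [simp]: "fst (kronecker_cover V E) = V \<times> UNIV"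
  by (simp add: kronecker_cover_def)

lemma graph_iso_map_kronecker_cover:
  assumes "graph_iso_map g (VG, EG) (VH, EH)"
  shows "graph_iso_map (map_prod g id) (kronecker_cover VG EG) (kronecker_cover VH EH)"
  using assms bij_betw_map_prod[of g VG VH id UNIV UNIV]
  unfolding graph_iso_map_def kronecker_cover_edge by simp

lemma image_fibre_if_layer_swap_commutes:
  assumes "\<theta> (layer_swap (v, True)) = layer_swap (\<theta> (v, True))"
  shows "\<theta> ` ({v} \<times> UNIV) = {fst (\<theta> (v, True))} \<times> UNIV"
proof -
  have "{v} \<times> UNIV = {(v, True), layer_swap (v, True)}" by (simp add: layer_swap_pair)
  then show ?thesis using assms layer_swap_pair[of "\<theta> (v, True)"] by simp
qed

lemma graph_iso_of_kronecker_cover_iso: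
  assumes \<theta>: "graph_iso_map \<theta> (kronecker_cover VG EG) (kronecker_cover VH EH)"
    and swap: "\<And>x. x \<in> VG \<times> UNIV \<Longrightarrow> \<theta> (layer_swap x) = layer_swap (\<theta> x)"
  shows "graph_iso (VG, EG) (VH, EH)"
proof -
  define g where "g v = fst (\<theta> (v, True))" for v
  have bij: "bij_betw \<theta> (VG \<times> UNIV) (VH \<times> UNIV)"
    using graph_iso_mapD(1)[OF \<theta>] by simp
  have fibre: "\<theta> ` ({v} \<times> UNIV) = {g v} \<times> UNIV" if "v \<in> VG" for v
    unfolding g_def using that swap by (intro image_fibre_if_layer_swap_commutes) simp
  have fibre_sub: "{v} \<times> UNIV \<subseteq> VG \<times> UNIV" if "v \<in> VG" for v
    using that by auto
  have "inj_on g VG"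
  proof (rule inj_onI)
    fix u v assume "u \<in> VG" "v \<in> VG" "g u = g v"
    then have "\<theta> ` ({u} \<times> UNIV) = \<theta> ` ({v} \<times> UNIV)" using fibre by simp
    with \<open>u \<in> VG\<close> \<open>v \<in> VG\<close> show "u = v"
      using inj_on_image_eq_iff[OF bij_betw_imp_inj_on[OF bij] fibre_sub fibre_sub] by blast
  qed
  moreover have "g ` VG = VH"
  proof -
    have "VH \<times> UNIV = (\<Union>v\<in>VG. \<theta> ` ({v} \<times> UNIV))"
      using bij_betw_imp_surj_on[OF bij] by blast
    also have "\<dots> = g ` VG \<times> UNIV" using fibre by auto
    finally show ?thesis by blast
  qed
  moreover have "{u, v} \<in> EG \<longleftrightarrow> {g u, g v} \<in> EH" if "u \<in> VG" "v \<in> VG" for u v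
  proof -
    have "{u, v} \<in> EG \<longleftrightarrow> (\<exists>y\<in>{v} \<times> UNIV. {(u, True), y} \<in> snd (kronecker_cover VG EG))"
      using kronecker_cover_edge_fibre[of "(u, True)" v] by auto
    also have "\<dots> \<longleftrightarrow> (\<exists>y\<in>{v} \<times> UNIV. {\<theta> (u, True), \<theta> y} \<in> snd (kronecker_cover VH EH))"
      using graph_iso_mapD(2)[OF \<theta>] that by auto
    also have "\<dots> \<longleftrightarrow> (\<exists>y\<in>{g v} \<times> UNIV. {\<theta> (u, True), y} \<in> snd (kronecker_cover VH EH))"
      unfolding fibre[OF \<open>v \<in> VG\<close>, symmetric] by blast
    also have "\<dots> \<longleftrightarrow> {g u, g v} \<in> EH"
      using kronecker_cover_edge_fibre[of "\<theta> (u, True)" "g v"] by (auto simp: g_def)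
    finally show ?thesis .
  qed
  ultimately show ?thesis unfolding graph_iso_def bij_betw_def by auto
qed

lemma graph_iso_map_layer_swap:
  "graph_iso_map layer_swap (kronecker_cover V E) (kronecker_cover V E)"
proof -
  have "bij_betw layer_swap (V \<times> UNIV) (V \<times> UNIV)"
    by (rule bij_betw_byWitness[where f' = layer_swap]) (auto simp: layer_swap_def)
  then show ?thesis
    unfolding graph_iso_map_def kronecker_cover_edge by (auto simp: insert_commute)
qed

lemma connected_bipartition_unique:
  assumes "connected_graph V E" "bipartition V E V1 V2"
    and proper: "\<And>u v. {u, v} \<in> E \<Longrightarrow> s u \<noteq> s v"
    and "u \<in> V" "v \<in> V"
  shows "(u \<in> V1 \<longleftrightarrow> v \<in> V1) \<longleftrightarrow> (s u \<longleftrightarrow> s v)"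
proof -
  have "(\<lambda>x y. {x, y} \<in> E)\<^sup>*\<^sup>* u v"
    using assms(1,4,5) unfolding connected_graph_def by blast
  then show ?thesis
  proof (induction rule: rtranclp_induct)
    case (step w z)
    have "w \<in> V1 \<longleftrightarrow> z \<notin> V1" using assms(2) step(2) unfolding bipartition_def by blast
    with step.IH proper[OF step(2)] show ?case by blast
  qed simp
qed

(* Identity outside V, as graph_aut requires of automorphisms. *)
definition cover_polarity :: "'b set \<Rightarrow> ('b \<times> bool \<Rightarrow> 'a) \<Rightarrow> 'a set \<Rightarrow> 'a \<Rightarrow> 'a" where
  "cover_polarity VG \<phi> V v = (if v \<in> V then \<phi> (layer_swap (inv_into (VG \<times> UNIV) \<phi> v)) else v)"

context
  fixes VG :: "'b set" and EG :: "'b set set" and V :: "'a set" and E :: "'a set set"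
    and \<phi> :: "'b \<times> bool \<Rightarrow> 'a"
  assumes \<phi>: "graph_iso_map \<phi> (kronecker_cover VG EG) (V, E)"
begin

lemma cover_iso_bij: "bij_betw \<phi> (VG \<times> UNIV) V"
  using graph_iso_mapD(1)[OF \<phi>] by simp

lemma cover_iso_edge:
  "x \<in> VG \<times> UNIV \<Longrightarrow> y \<in> VG \<times> UNIV \<Longrightarrow> {\<phi> x, \<phi> y} \<in> E \<longleftrightarrow> {x, y} \<in> snd (kronecker_cover VG EG)"
  using graph_iso_mapD(2)[OF \<phi>] by simp

lemma cover_iso_obtain:
  assumes "v \<in> V"
  obtains x where "x \<in> VG \<times> UNIV" "v = \<phi> x"
  using assms bij_betw_imp_surj_on[OF cover_iso_bij] by blast

lemma cover_polarity_apply: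
  "x \<in> VG \<times> UNIV \<Longrightarrow> cover_polarity VG \<phi> V (\<phi> x) = \<phi> (layer_swap x)"
  using cover_iso_bij by (simp add: cover_polarity_def bij_betw_apply bij_betw_inv_into_left)

lemma cover_polarity_graph_aut: "cover_polarity VG \<phi> V \<in> graph_aut V E"
proof -
  have "graph_iso_map (\<phi> \<circ> layer_swap \<circ> inv_into (VG \<times> UNIV) \<phi>) (V, E) (V, E)"
    using graph_iso_map_comp[OF graph_iso_map_comp[OF graph_iso_map_inv_into[OF \<phi>]
          graph_iso_map_layer_swap] \<phi>]
    by (simp add: comp_assoc)
  then have "graph_iso_map (cover_polarity VG \<phi> V) (V, E) (V, E)"
    by (rule graph_iso_map_cong) (simp add: cover_polarity_def)
  then show ?thesis by (simp add: graph_aut_iff cover_polarity_def)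
qed

lemma cover_polarity_fixed_point_free_involution:
  assumes "v \<in> V"
  shows "cover_polarity VG \<phi> V v \<in> V" and "cover_polarity VG \<phi> V (cover_polarity VG \<phi> V v) = v"
    and "cover_polarity VG \<phi> V v \<noteq> v"
proof -
  obtain x where x: "x \<in> VG \<times> UNIV" "v = \<phi> x" by (rule cover_iso_obtain[OF assms])
  have swap_x: "layer_swap x \<in> VG \<times> UNIV" using x(1) by (simp add: mem_Times_iff)
  note \<pi>_x = cover_polarity_apply[OF x(1)]
  show "cover_polarity VG \<phi> V v \<in> V"
    unfolding x(2) \<pi>_x using bij_betw_apply[OF cover_iso_bij swap_x] .
  show "cover_polarity VG \<phi> V (cover_polarity VG \<phi> V v) = v"
    unfolding x(2) \<pi>_x using cover_polarity_apply[OF swap_x] by simp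
  show "cover_polarity VG \<phi> V v \<noteq> v"
    unfolding x(2) \<pi>_x
    using inj_on_eq_iff[OF bij_betw_imp_inj_on[OF cover_iso_bij] swap_x x(1)] layer_swap_neq[of x]
    by simp
qed

lemma cover_polarity_not_adjacent:
  assumes "simple_graph VG EG" "v \<in> V"
  shows "{v, cover_polarity VG \<phi> V v} \<notin> E"
proof -
  obtain x where x: "x \<in> VG \<times> UNIV" "v = \<phi> x" by (rule cover_iso_obtain[OF assms(2)])
  have "{x, layer_swap x} \<notin> snd (kronecker_cover VG EG)"
    using assms(1) unfolding kronecker_cover_edge simple_graph_def by auto
  then show ?thesis using x cover_polarity_apply cover_iso_edge by (simp add: mem_Times_iff)
qed

lemma cover_polarity_exchanges_sides:
  assumes "simple_graph V E" "connected_graph V E" "bipartition V E V1 V2" and v: "v \<in> V"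
  shows "v \<in> V1 \<longleftrightarrow> cover_polarity VG \<phi> V v \<notin> V1"
proof -
  define s where "s w = snd (inv_into (VG \<times> UNIV) \<phi> w)" for w
  have s_\<phi>: "s (\<phi> x) = snd x" if "x \<in> VG \<times> UNIV" for x
    using cover_iso_bij that by (simp add: s_def bij_betw_inv_into_left)
  have s_edge: "s u \<noteq> s w" if uw: "{u, w} \<in> E" for u w
  proof -
    have "u \<in> V" "w \<in> V" using assms(1) uw unfolding simple_graph_def by (auto simp: doubleton_eq_iff)
    then obtain x y where "x \<in> VG \<times> UNIV" "u = \<phi> x" "y \<in> VG \<times> UNIV" "w = \<phi> y"
      by (metis cover_iso_obtain)
    then show ?thesis using uw cover_iso_edge s_\<phi> by (simp add: kronecker_cover_edge)
  qed
  obtain x where x: "x \<in> VG \<times> UNIV" "v = \<phi> x" by (rule cover_iso_obtain[OF v])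
  have "s (cover_polarity VG \<phi> V v) \<longleftrightarrow> \<not> s v"
    using x cover_polarity_apply s_\<phi>[of x] s_\<phi>[of "layer_swap x"] by (simp add: mem_Times_iff)
  then show ?thesis
    using connected_bipartition_unique[where s = s, OF assms(2,3) s_edge v
        cover_polarity_fixed_point_free_involution(1)[OF v]]
    by blast
qed

lemma cover_polarity_in_polarities:
  assumes "simple_graph VG EG" "simple_graph V E" "connected_graph V E" "bipartition V E V1 V2"
  shows "cover_polarity VG \<phi> V \<in> polarities V E V1 V2"
proof -
  let ?\<pi> = "cover_polarity VG \<phi> V"
  note invol = cover_polarity_fixed_point_free_involution
    and sides = cover_polarity_exchanges_sides[OF assms(2-4)]
  have "?\<pi> ` V1 = V2"
  proof
    show "?\<pi> ` V1 \<subseteq> V2" using assms(4) invol(1) sides unfolding bipartition_def by blast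
    show "V2 \<subseteq> ?\<pi> ` V1"
    proof
      fix w assume "w \<in> V2"
      then have "w \<in> V" "?\<pi> w \<in> V1" using assms(4) sides unfolding bipartition_def by blast+
      then show "w \<in> ?\<pi> ` V1" using invol(2) by (metis image_eqI)
    qed
  qed
  then show ?thesis
    unfolding polarities_def
    using cover_polarity_graph_aut invol(2,3) cover_polarity_not_adjacent[OF assms(1)] by blast
qed

end

lemma graph_aut_conjugates_cover_polarities:
  assumes \<phi>: "graph_iso_map \<phi> (kronecker_cover VG EG) (V, E)"
    and \<psi>: "graph_iso_map \<psi> (kronecker_cover VH EH) (V, E)"
    and "graph_iso (VG, EG) (VH, EH)"
  shows "\<exists>\<alpha>\<in>graph_aut V E. \<forall>x. cover_polarity VH \<psi> V (\<alpha> x) = \<alpha> (cover_polarity VG \<phi> V x)"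
proof -
  obtain g where g: "graph_iso_map g (VG, EG) (VH, EH)"
    using assms(3) graph_iso_iff_graph_iso_map by blast
  let ?\<theta> = "map_prod g (id :: bool \<Rightarrow> bool)"
  define \<alpha> where "\<alpha> x = (if x \<in> V then \<psi> (?\<theta> (inv_into (VG \<times> UNIV) \<phi> x)) else x)" for x
  have "graph_iso_map (\<psi> \<circ> ?\<theta> \<circ> inv_into (VG \<times> UNIV) \<phi>) (V, E) (V, E)"
    using graph_iso_map_comp[OF graph_iso_map_comp[OF graph_iso_map_inv_into[OF \<phi>]
          graph_iso_map_kronecker_cover[OF g]] \<psi>]
    by (simp add: comp_assoc)
  then have "graph_iso_map \<alpha> (V, E) (V, E)"
    by (rule graph_iso_map_cong) (simp add: \<alpha>_def)
  then have aut: "\<alpha> \<in> graph_aut V E" by (simp add: graph_aut_iff \<alpha>_def)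
  have \<alpha>_\<phi>: "\<alpha> (\<phi> x) = \<psi> (?\<theta> x)" if "x \<in> VG \<times> UNIV" for x
    using that cover_iso_bij[OF \<phi>] by (simp add: \<alpha>_def bij_betw_apply bij_betw_inv_into_left)
  have "cover_polarity VH \<psi> V (\<alpha> v) = \<alpha> (cover_polarity VG \<phi> V v)" for v
  proof (cases "v \<in> V")
    case True
    then obtain x where x: "x \<in> VG \<times> UNIV" "v = \<phi> x" by (rule cover_iso_obtain[OF \<phi>])
    have "?\<theta> x \<in> VH \<times> UNIV" "layer_swap x \<in> VG \<times> UNIV"
      using x(1) graph_iso_mapD(1)[OF g] by (auto simp: bij_betw_apply mem_Times_iff)
    then show ?thesis
      using x \<alpha>_\<phi> cover_polarity_apply[OF \<phi>] cover_polarity_apply[OF \<psi>]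
      by (simp add: layer_swap_def)
  qed (simp add: \<alpha>_def cover_polarity_def)
  with aut show ?thesis by blast
qed

lemma graph_iso_of_graph_aut_conjugating_cover_polarities:
  assumes \<phi>: "graph_iso_map \<phi> (kronecker_cover VG EG) (V, E)"
    and \<psi>: "graph_iso_map \<psi> (kronecker_cover VH EH) (V, E)"
    and \<alpha>: "\<alpha> \<in> graph_aut V E"
    and conj: "\<And>x. cover_polarity VH \<psi> V (\<alpha> x) = \<alpha> (cover_polarity VG \<phi> V x)"
  shows "graph_iso (VG, EG) (VH, EH)"
proof -
  define \<theta> where "\<theta> = inv_into (VH \<times> UNIV) \<psi> \<circ> \<alpha> \<circ> \<phi>"
  have \<theta>: "graph_iso_map \<theta> (kronecker_cover VG EG) (kronecker_cover VH EH)"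
    using graph_iso_map_comp[OF graph_iso_map_comp[OF \<phi> \<alpha>[unfolded graph_aut_iff, THEN conjunct1]]
        graph_iso_map_inv_into[OF \<psi>]]
    by (simp add: \<theta>_def comp_assoc)
  have \<psi>_\<theta>: "\<psi> (\<theta> x) = \<alpha> (\<phi> x)" if "x \<in> VG \<times> UNIV" for x
  proof -
    have "\<alpha> (\<phi> x) \<in> V"
      using that \<alpha> bij_betw_apply[OF cover_iso_bij[OF \<phi>]] unfolding graph_aut_def
      by (auto simp: bij_betw_apply)
    then show ?thesis by (simp add: \<theta>_def bij_betw_inv_into_right[OF cover_iso_bij[OF \<psi>]])
  qed
  have \<theta>_in: "\<theta> x \<in> VH \<times> UNIV" if "x \<in> VG \<times> UNIV" for x
    using graph_iso_mapD(1)[OF \<theta>] that by (simp add: bij_betw_apply)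
  have "\<theta> (layer_swap x) = layer_swap (\<theta> x)" if x: "x \<in> VG \<times> UNIV" for x
  proof -
    have swap_x: "layer_swap x \<in> VG \<times> UNIV" using x by (simp add: mem_Times_iff)
    have swap_\<theta>x: "layer_swap (\<theta> x) \<in> VH \<times> UNIV" using \<theta>_in[OF x] by (simp add: mem_Times_iff)
    have "\<psi> (\<theta> (layer_swap x)) = \<alpha> (cover_polarity VG \<phi> V (\<phi> x))"
      using \<psi>_\<theta>[OF swap_x] cover_polarity_apply[OF \<phi> x] by simp
    also have "\<dots> = cover_polarity VH \<psi> V (\<psi> (\<theta> x))" using conj \<psi>_\<theta>[OF x] by simp
    also have "\<dots> = \<psi> (layer_swap (\<theta> x))" using cover_polarity_apply[OF \<psi> \<theta>_in[OF x]] .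
    finally show ?thesis
      using \<theta>_in[OF swap_x] swap_\<theta>x bij_betw_imp_inj_on[OF cover_iso_bij[OF \<psi>]]
      by (simp add: inj_on_eq_iff)
  qed
  with \<theta> show ?thesis by (rule graph_iso_of_kronecker_cover_iso)
qed

lemma polarity_conj_iff:
  assumes "\<pi> \<in> polarities V E V1 V2" "\<pi>' \<in> polarities V E V1 V2"
  shows "(\<pi>, \<pi>') \<in> polarity_conj V E V1 V2 \<longleftrightarrow> (\<exists>\<alpha>\<in>graph_aut V E. \<forall>x. \<pi>' (\<alpha> x) = \<alpha> (\<pi> x))"
proof -
  have "\<pi>' = \<alpha> \<circ> \<pi> \<circ> inv \<alpha> \<longleftrightarrow> (\<forall>x. \<pi>' (\<alpha> x) = \<alpha> (\<pi> x))" if "\<alpha> \<in> graph_aut V E" for \<alpha>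
  proof -
    have "bij \<alpha>" using that by (rule permutes_bij[OF graph_aut_permutes])
    show ?thesis
    proof
      assume "\<pi>' = \<alpha> \<circ> \<pi> \<circ> inv \<alpha>"
      then show "\<forall>x. \<pi>' (\<alpha> x) = \<alpha> (\<pi> x)" using \<open>bij \<alpha>\<close> by (simp add: bij_is_inj)
    next
      assume "\<forall>x. \<pi>' (\<alpha> x) = \<alpha> (\<pi> x)"
      then have "\<pi>' y = \<alpha> (\<pi> (inv \<alpha> y))" for y
        using \<open>bij \<alpha>\<close> by (metis bij_is_surj surj_f_inv_f)
      then show "\<pi>' = \<alpha> \<circ> \<pi> \<circ> inv \<alpha>" by auto
    qed
  qed
  with assms show ?thesis unfolding polarity_conj_def by auto
qed

lemma bipartition_subset: "bipartition V E V1 V2 \<Longrightarrow> V1 \<subseteq> V \<and> V2 \<subseteq> V"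
  unfolding bipartition_def by blast

(* The orbit graph K/\<pi>: the orbit {u, \<pi> u} is represented by its vertex u \<in> V1 and relabelled
   by h; the cover vertex (h u, True) lies over u and (h u, False) over \<pi> u. *)
definition polarity_quotient_edges :: "('a \<Rightarrow> 'b) \<Rightarrow> 'a set \<Rightarrow> 'a set set \<Rightarrow> ('a \<Rightarrow> 'a) \<Rightarrow> 'b set set" where
  "polarity_quotient_edges h V1 E \<pi> = {{h u, h w} | u w. u \<in> V1 \<and> w \<in> V1 \<and> {u, \<pi> w} \<in> E}"

definition polarity_quotient_cover :: "('a \<Rightarrow> 'b) \<Rightarrow> 'a set \<Rightarrow> ('a \<Rightarrow> 'a) \<Rightarrow> 'b \<times> bool \<Rightarrow> 'a" where
  "polarity_quotient_cover h V1 \<pi> x =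
     (if snd x then inv_into V1 h (fst x) else \<pi> (inv_into V1 h (fst x)))"

context
  fixes V :: "'a set" and E :: "'a set set" and V1 V2 :: "'a set" and h :: "'a \<Rightarrow> 'b"
  assumes simple: "simple_graph V E"
    and bip: "bipartition V E V1 V2"
    and h: "inj_on h V1"
begin

context
  fixes \<pi> :: "'a \<Rightarrow> 'a"
  assumes \<pi>: "\<pi> \<in> polarities V E V1 V2"
begin

lemma polarity_involution: "v \<in> V \<Longrightarrow> \<pi> (\<pi> v) = v"
  and polarity_V1: "u \<in> V1 \<Longrightarrow> \<pi> u \<in> V2"
  and polarity_V2: "v \<in> V2 \<Longrightarrow> \<pi> v \<in> V1"
  and polarity_edge_sym: "u \<in> V \<Longrightarrow> w \<in> V \<Longrightarrow> {w, \<pi> u} \<in> E \<longleftrightarrow> {u, \<pi> w} \<in> E"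
proof -
  have aut: "\<pi> \<in> graph_aut V E" and inv: "\<And>v. v \<in> V \<Longrightarrow> \<pi> (\<pi> v) = v" and img: "\<pi> ` V1 = V2"
    using \<pi> unfolding polarities_def by auto
  show "v \<in> V \<Longrightarrow> \<pi> (\<pi> v) = v" for v by (rule inv)
  show "u \<in> V1 \<Longrightarrow> \<pi> u \<in> V2" for u using img by blast
  show "v \<in> V2 \<Longrightarrow> \<pi> v \<in> V1" for v using img inv bipartition_subset[OF bip] by force
  show "{w, \<pi> u} \<in> E \<longleftrightarrow> {u, \<pi> w} \<in> E" if "u \<in> V" "w \<in> V" for u w
  proof -
    have "{w, \<pi> u} \<in> E \<longleftrightarrow> {\<pi> w, \<pi> (\<pi> u)} \<in> E"
      using aut that unfolding graph_aut_def by (auto simp: bij_betw_apply)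
    then show ?thesis using inv that by (simp add: insert_commute)
  qed
qed

lemma polarity_quotient_edge:
  assumes "u \<in> V1" "w \<in> V1"
  shows "{h u, h w} \<in> polarity_quotient_edges h V1 E \<pi> \<longleftrightarrow> {u, \<pi> w} \<in> E"
proof
  assume "{h u, h w} \<in> polarity_quotient_edges h V1 E \<pi>"
  then obtain u' w' where "{h u, h w} = {h u', h w'}" "u' \<in> V1" "w' \<in> V1" "{u', \<pi> w'} \<in> E"
    unfolding polarity_quotient_edges_def by blast
  then show "{u, \<pi> w} \<in> E"
    using assms h polarity_edge_sym bipartition_subset[OF bip] by (auto simp: doubleton_eq_iff inj_on_eq_iff)
qed (use assms in \<open>auto simp: polarity_quotient_edges_def\<close>)

lemma simple_graph_polarity_quotient: "simple_graph (h ` V1) (polarity_quotient_edges h V1 E \<pi>)"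
proof -
  have "V1 \<subseteq> V" using bipartition_subset[OF bip] by blast
  then have "finite (h ` V1)" using simple unfolding simple_graph_def by (auto intro: finite_subset)
  moreover have "h u \<noteq> h w" if "u \<in> V1" "w \<in> V1" "{u, \<pi> w} \<in> E" for u w
    using that \<pi> h \<open>V1 \<subseteq> V\<close> unfolding polarities_def by (auto simp: inj_on_eq_iff)
  ultimately show ?thesis
    unfolding simple_graph_def polarity_quotient_edges_def by blast
qed

lemma polarity_quotient_cover_apply:
  "u \<in> V1 \<Longrightarrow> polarity_quotient_cover h V1 \<pi> (h u, b) = (if b then u else \<pi> u)"
  using h by (simp add: polarity_quotient_cover_def)

lemma bij_betw_polarity_quotient_cover:
  "bij_betw (polarity_quotient_cover h V1 \<pi>) (h ` V1 \<times> UNIV) V"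
proof (rule bij_betw_byWitness[where f' = "\<lambda>v. if v \<in> V1 then (h v, True) else (h (\<pi> v), False)"])
  have V: "V1 \<union> V2 = V" "V1 \<inter> V2 = {}" using bip unfolding bipartition_def by auto
  note \<phi>_h = polarity_quotient_cover_apply
  show "\<forall>x\<in>h ` V1 \<times> UNIV. (if polarity_quotient_cover h V1 \<pi> x \<in> V1
      then (h (polarity_quotient_cover h V1 \<pi> x), True)
      else (h (\<pi> (polarity_quotient_cover h V1 \<pi> x)), False)) = x"
    using \<phi>_h polarity_V1 polarity_involution V by fastforce
  show "\<forall>v\<in>V. polarity_quotient_cover h V1 \<pi> (if v \<in> V1 then (h v, True) else (h (\<pi> v), False)) = v"
    using \<phi>_h polarity_V2 polarity_involution V by auto
qed (use polarity_quotient_cover_apply polarity_V1 polarity_V2 bip in \<open>auto simp: bipartition_def\<close>)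

lemma polarity_quotient_cover_iso:
  "graph_iso_map (polarity_quotient_cover h V1 \<pi>)
     (kronecker_cover (h ` V1) (polarity_quotient_edges h V1 E \<pi>)) (V, E)"
proof -
  let ?\<phi> = "polarity_quotient_cover h V1 \<pi>"
  have V: "V1 \<union> V2 = V" "V1 \<inter> V2 = {}"
    and bip_edge: "\<And>u v. {u, v} \<in> E \<Longrightarrow> (u \<in> V1 \<and> v \<in> V2) \<or> (u \<in> V2 \<and> v \<in> V1)"
    using bip unfolding bipartition_def by auto
  note \<phi>_h = polarity_quotient_cover_apply
  have "{x, y} \<in> snd (kronecker_cover (h ` V1) (polarity_quotient_edges h V1 E \<pi>))
      \<longleftrightarrow> {?\<phi> x, ?\<phi> y} \<in> E" if xy: "x \<in> h ` V1 \<times> UNIV" "y \<in> h ` V1 \<times> UNIV" for x y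
  proof -
    obtain u a where x: "x = (h u, a)" "u \<in> V1" using xy(1) by fastforce
    obtain w b where y: "y = (h w, b)" "w \<in> V1" using xy(2) by fastforce
    have no_edge: "{v, v'} \<notin> E" if "v \<in> V1 \<and> v' \<in> V1 \<or> v \<in> V2 \<and> v' \<in> V2" for v v'
      using that bip_edge V(2) by blast
    have "u \<in> V" "w \<in> V" using x(2) y(2) V(1) by blast+
    have "{x, y} \<in> snd (kronecker_cover (h ` V1) (polarity_quotient_edges h V1 E \<pi>))
        \<longleftrightarrow> {u, \<pi> w} \<in> E \<and> a \<noteq> b"
      using x y polarity_quotient_edge[OF x(2) y(2)] by (simp add: kronecker_cover_edge)
    then show ?thesis
      using x y \<phi>_h[OF x(2)] \<phi>_h[OF y(2)] no_edge[of u w] no_edge[of "\<pi> u" "\<pi> w"]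
        polarity_V1[OF x(2)] polarity_V1[OF y(2)] polarity_edge_sym[OF \<open>u \<in> V\<close> \<open>w \<in> V\<close>]
      by (cases a; cases b) (simp_all add: insert_commute)
  qed
  with bij_betw_polarity_quotient_cover show ?thesis unfolding graph_iso_map_def by simp
qed

lemma cover_polarity_polarity_quotient_cover:
  "cover_polarity (h ` V1) (polarity_quotient_cover h V1 \<pi>) V = \<pi>"
proof
  fix v
  show "cover_polarity (h ` V1) (polarity_quotient_cover h V1 \<pi>) V v = \<pi> v"
  proof (cases "v \<in> V")
    case True
    then obtain u b where u: "u \<in> V1" and v: "v = polarity_quotient_cover h V1 \<pi> (h u, b)"
      using cover_iso_obtain[OF polarity_quotient_cover_iso] by blast
    have "u \<in> V" using u bipartition_subset[OF bip] by blast
    then show ?thesis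
      using cover_polarity_apply[OF polarity_quotient_cover_iso, of "(h u, b)"] u v
        polarity_quotient_cover_apply[OF u] polarity_involution
      by (cases b) (simp_all add: layer_swap_def)
  next
    case False
    then show ?thesis using \<pi> by (simp add: cover_polarity_def polarities_def graph_aut_def)
  qed
qed

end

lemma polarity_conj_iff_graph_iso_polarity_quotients:
  assumes \<pi>: "\<pi> \<in> polarities V E V1 V2" and \<pi>': "\<pi>' \<in> polarities V E V1 V2"
  shows "(\<pi>, \<pi>') \<in> polarity_conj V E V1 V2 \<longleftrightarrow>
    graph_iso (h ` V1, polarity_quotient_edges h V1 E \<pi>) (h ` V1, polarity_quotient_edges h V1 E \<pi>')"
  using polarity_conj_iff[OF assms]
    graph_aut_conjugates_cover_polarities[OF polarity_quotient_cover_iso[OF \<pi>] polarity_quotient_cover_iso[OF \<pi>']]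
    graph_iso_of_graph_aut_conjugating_cover_polarities[OF polarity_quotient_cover_iso[OF \<pi>] polarity_quotient_cover_iso[OF \<pi>']]
  unfolding cover_polarity_polarity_quotient_cover[OF \<pi>] cover_polarity_polarity_quotient_cover[OF \<pi>']
  by blast

lemma graph_iso_polarity_quotient_cover_polarity:
  assumes "simple_graph VG EG" "connected_graph V E" and \<phi>: "graph_iso_map \<phi> (kronecker_cover VG EG) (V, E)"
  shows "graph_iso (h ` V1, polarity_quotient_edges h V1 E (cover_polarity VG \<phi> V)) (VG, EG)"
proof -
  have \<pi>: "cover_polarity VG \<phi> V \<in> polarities V E V1 V2"
    using cover_polarity_in_polarities[OF \<phi> assms(1) simple assms(2) bip] .
  have "id \<in> graph_aut V E" by (simp add: graph_aut_def)
  with polarity_quotient_cover_iso[OF \<pi>] \<phi> show ?thesis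
    by (rule graph_iso_of_graph_aut_conjugating_cover_polarities)
      (simp add: cover_polarity_polarity_quotient_cover[OF \<pi>])
qed

end

lemma polarity_quotient_in_kc_preimages:
  fixes h :: "'a \<Rightarrow> nat"
  assumes "simple_graph V E" "bipartition V E V1 V2" "inj_on h V1" "\<pi> \<in> polarities V E V1 V2"
  shows "(h ` V1, polarity_quotient_edges h V1 E \<pi>) \<in> kc_preimages V E"
  using simple_graph_polarity_quotient[OF assms] polarity_quotient_cover_iso[OF assms]
  unfolding kc_preimages_def graph_iso_iff_graph_iso_map by auto

lemma kc_preimage_iso_polarity_quotient:
  fixes h :: "'a \<Rightarrow> nat"
  assumes "simple_graph V E" "connected_graph V E" "bipartition V E V1 V2" "inj_on h V1"
    and G: "G \<in> kc_preimages V E"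
  shows "\<exists>\<pi>\<in>polarities V E V1 V2.
    ((h ` V1, polarity_quotient_edges h V1 E \<pi>), G) \<in> iso_rel (kc_preimages V E)"
proof -
  obtain \<phi> where G_simple: "simple_graph (fst G) (snd G)"
    and \<phi>: "graph_iso_map \<phi> (kronecker_cover (fst G) (snd G)) (V, E)"
    using G unfolding kc_preimages_def graph_iso_iff_graph_iso_map by auto
  have \<pi>: "cover_polarity (fst G) \<phi> V \<in> polarities V E V1 V2"
    using cover_polarity_in_polarities[OF \<phi> G_simple assms(1-3)] .
  show ?thesis
    using polarity_quotient_in_kc_preimages[OF assms(1,3,4) \<pi>] G
      graph_iso_polarity_quotient_cover_polarity[OF assms(1,3,4) G_simple assms(2) \<phi>] \<pi>
    by (auto simp: iso_rel_def)
qed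

theorem proposition3:
  fixes V :: "'a set" and E :: "'a set set" and V1 V2 :: "'a set"
  assumes "simple_graph V E"
    and "connected_graph V E"
    and "bipartition V E V1 V2"
  shows "finite (kc_preimages V E // iso_rel (kc_preimages V E)) \<and>
         card (kc_preimages V E // iso_rel (kc_preimages V E)) =
         card (polarities V E V1 V2 // polarity_conj V E V1 V2)"
proof -
  let ?A = "kc_preimages V E" and ?B = "polarities V E V1 V2"
  have "finite V" using assms(1) unfolding simple_graph_def by blast
  then obtain h :: "'a \<Rightarrow> nat" where h: "inj_on h V1"
    using bipartition_subset[OF assms(3)] finite_imp_inj_to_nat_seg finite_subset by metis
  let ?F = "\<lambda>\<pi>. (h ` V1, polarity_quotient_edges h V1 E \<pi>)"
  have "bij_betw (\<lambda>X. iso_rel ?A `` (?F ` X)) (?B // polarity_conj V E V1 V2) (?A // iso_rel ?A)"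
  proof (rule bij_betw_quotients)
    show "?F ` ?B \<subseteq> ?A" using polarity_quotient_in_kc_preimages[OF assms(1,3) h] by blast
    show "(\<pi>, \<pi>') \<in> polarity_conj V E V1 V2 \<longleftrightarrow> (?F \<pi>, ?F \<pi>') \<in> iso_rel ?A"
      if "\<pi> \<in> ?B" "\<pi>' \<in> ?B" for \<pi> \<pi>'
      using polarity_conj_iff_graph_iso_polarity_quotients[OF assms(1,3) h that]
        polarity_quotient_in_kc_preimages[OF assms(1,3) h] that
      by (simp add: iso_rel_def)
  qed (auto simp: iso_rel_equiv polarity_conj_def kc_preimage_iso_polarity_quotient[OF assms h])
  moreover have "finite (?B // polarity_conj V E V1 V2)"
    using finite_graph_aut[OF \<open>finite V\<close>, of E]
    by (auto intro: finite_quotient simp: polarities_def polarity_conj_def)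
  ultimately show ?thesis by (metis bij_betw_finite bij_betw_same_card)
qed

end
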